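(* (i) There exist a sequence of Pauli Hamiltonians $H^{(m)}=\sum_i c_i P_i$ with all coefficients satisfying $|c_i|=\Theta(1)$, indexed by $m\to\infty$, such that the grouping $\mathcal{G}^{(m)}_{\mathrm{SI}}$ produced by sorted insertion has $m$ groups, and an overlapped grouping $\mathcal{R}^{(m)}$ of $H^{(m)}$, such that $$\frac{\mathrm{Var}^*(\mathcal{G}^{(m)}_{\mathrm{SI}})}{\mathrm{Var}^*(\mathcal{R}^{(m)})}=\Theta(m),$$ where variances are computed in the state-independent, zero-covariance model described in the context (for the maximally mixed state). (ii) In this same model, this is asymptotically the largest possible reduction: for any (disjoint) grouping $\mathcal{G}$ with $m$ groups of a Hamiltonian $H$ and any overlapped grouping $\mathcal{R}$ of $H$, $\mathrm{Var}^*(\mathcal{G})/\mathrm{Var}^*(\mathcal{R})=O(m)$.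
   Context: A Pauli Hamiltonian on $n$ qubits is $H=\sum_{i=1}^N c_iP_i$ with real nonzero $c_i$ and distinct Pauli strings $P_i\in\{I,X,Y,Z\}^{\otimes n}$; $\mathrm{supp}(H)=\{P_1,\dots,P_N\}$. A grouping of $H$ is a list $\mathcal{G}=(G^{[1]},\dots,G^{[m]})$ of pairwise disjoint sets, each consisting of mutually commuting operators of $\mathrm{supp}(H)$, whose union is $\mathrm{supp}(H)$; an overlapped grouping is the same without the disjointness requirement. Sorted insertion: order the Pauli terms by decreasing $|c_i|$ and insert each term in turn into the first existing group all of whose members commute with it, creating a new group if there is none. Measurement model: a total budget of $M$ shots is split as positive shot counts $M_j$ with $\sum_j M_j=M$; group $G^{[j]}$ is measured $M_j$ times, each shot giving simultaneous $\pm1$ outcomes of all its operators; shots are independent. For $P_i$ let $\Gamma(i)=\{j:P_i\in G^{[j]}\}$; $\langle P_i\rangle$ is estimated by $\sum_{j\in\Gamma(i)}w_{i,j}\overline{\langle P_i\rangle}_{(j)}$ with $\sum_{j\in\Gamma(i)}w_{i,j}=1$, where $\overline{\langle P_i\rangle}_{(j)}$ is the sample mean over the shots of group $j$, and the energy estimator is $\overline{E}(w)=\sum_ic_i\overline{\langle P_i\rangle}(w)$. State-independent zero-covariance model: each Pauli has single-shot variance $1$ and all covariances between distinct Pauli operators are $0$ (as for the maximally mixed state). $\mathrm{Var}^*(\cdot)$ denotes the variance of $\overline{E}(w)$ in this model minimized over the weights $w$ and over the shot allocation $\{M_j\}$ with fixed total $M$; for a disjoint grouping this equals $(\sum_j\sqrt{S_j})^2/M$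 with $S_j=\sum_{i:P_i\in G^{[j]}}c_i^2$. *)

theory Defs
  imports Complex_Main
begin

datatype pauli = PI | PX | PY | PZ

type_synonym pstring = "pauli list"

text \<open>A computational basis state of n qubits is a bool list of length n; a state vector
is a function from basis states to complex amplitudes.  A single-qubit Pauli maps the basis
state b to phase1 p b times the basis state flip1 p b
(X|b> = |not b>, Z|b> = (-1)^b |b>, Y|b> = i (-1)^b |not b>).\<close>

fun flip1 :: "pauli \<Rightarrow> bool \<Rightarrow> bool" where
  "flip1 PI b = b"
| "flip1 PX b = (\<not> b)"
| "flip1 PY b = (\<not> b)"
| "flip1 PZ b = b"

fun phase1 :: "pauli \<Rightarrow> bool \<Rightarrow> complex" where
  "phase1 PI b = 1"
| "phase1 PX b = 1"
| "phase1 PY b = (if b then - \<i> else \<i>)"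
| "phase1 PZ b = (if b then -1 else 1)"

text \<open>Action of the tensor-product operator P on a state vector psi:
(P psi)(x) = <x|P|y> psi(y) with y the unique preimage of x, namely y = flip(x).\<close>

definition pauli_op :: "pstring \<Rightarrow> (bool list \<Rightarrow> complex) \<Rightarrow> (bool list \<Rightarrow> complex)" where
  "pauli_op P \<psi> = (\<lambda>x. if length x = length P then
       (let y = map2 flip1 P x in (\<Prod>k<length P. phase1 (P ! k) (y ! k)) * \<psi> y)
     else 0)"

definition commutes :: "pstring \<Rightarrow> pstring \<Rightarrow> bool" where
  "commutes P Q \<longleftrightarrow> (\<forall>\<psi>. pauli_op P (pauli_op Q \<psi>) = pauli_op Q (pauli_op P \<psi>))"

definition supp :: "(pstring \<Rightarrow> real) \<Rightarrow> pstring set" where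
  "supp c = {P. c P \<noteq> 0}"

definition pauli_hamiltonian :: "nat \<Rightarrow> (pstring \<Rightarrow> real) \<Rightarrow> bool" where
  "pauli_hamiltonian n c \<longleftrightarrow> finite (supp c) \<and> supp c \<noteq> {} \<and> (\<forall>P\<in>supp c. length P = n)"

definition commuting_set :: "pstring set \<Rightarrow> bool" where
  "commuting_set S \<longleftrightarrow> (\<forall>P\<in>S. \<forall>Q\<in>S. commutes P Q)"

definition overlapped_grouping :: "(pstring \<Rightarrow> real) \<Rightarrow> pstring set list \<Rightarrow> bool" where
  "overlapped_grouping c R \<longleftrightarrow>
     (\<forall>j<length R. R ! j \<subseteq> supp c \<and> commuting_set (R ! j)) \<and> \<Union>(set R) = supp c"

definition grouping :: "(pstring \<Rightarrow> real) \<Rightarrow> pstring set list \<Rightarrow> bool" where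
  "grouping c G \<longleftrightarrow> overlapped_grouping c G \<and>
     (\<forall>i<length G. \<forall>j<length G. i \<noteq> j \<longrightarrow> G ! i \<inter> G ! j = {})"

fun si_insert :: "pstring set list \<Rightarrow> pstring \<Rightarrow> pstring set list" where
  "si_insert [] P = [{P}]"
| "si_insert (g # gs) P =
     (if \<forall>Q\<in>g. commutes Q P then insert P g # gs else g # si_insert gs P)"

definition sorted_insertion :: "pstring list \<Rightarrow> pstring set list" where
  "sorted_insertion ord = foldl si_insert [] ord"

definition si_order :: "(pstring \<Rightarrow> real) \<Rightarrow> pstring list \<Rightarrow> bool" where
  "si_order c ord \<longleftrightarrow> distinct ord \<and> set ord = supp c \<and>
     sorted_wrt (\<lambda>P Q. \<bar>c P\<bar> \<ge> \<bar>c Q\<bar>) ord"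

definition Gamma :: "pstring set list \<Rightarrow> pstring \<Rightarrow> nat set" where
  "Gamma R P = {j. j < length R \<and> P \<in> R ! j}"

definition shot_alloc :: "real \<Rightarrow> pstring set list \<Rightarrow> (nat \<Rightarrow> real) \<Rightarrow> bool" where
  "shot_alloc M R Ms \<longleftrightarrow> (\<forall>j<length R. Ms j > 0) \<and> (\<Sum>j<length R. Ms j) = M"

definition est_weights :: "(pstring \<Rightarrow> real) \<Rightarrow> pstring set list \<Rightarrow> (pstring \<Rightarrow> nat \<Rightarrow> real) \<Rightarrow> bool" where
  "est_weights c R w \<longleftrightarrow> (\<forall>P\<in>supp c. (\<Sum>j\<in>Gamma R P. w P j) = 1)"

text \<open>Variance of the energy estimator when every Pauli has single-shot variance 1, distinct
Paulis have zero covariance and shots are independent.\<close>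

definition est_var :: "(pstring \<Rightarrow> real) \<Rightarrow> pstring set list \<Rightarrow> (pstring \<Rightarrow> nat \<Rightarrow> real)
    \<Rightarrow> (nat \<Rightarrow> real) \<Rightarrow> real" where
  "est_var c R w Ms = (\<Sum>P\<in>supp c. (c P)\<^sup>2 * (\<Sum>j\<in>Gamma R P. (w P j)\<^sup>2 / Ms j))"

definition VarStar :: "real \<Rightarrow> (pstring \<Rightarrow> real) \<Rightarrow> pstring set list \<Rightarrow> real" where
  "VarStar M c R = Inf {est_var c R w Ms | w Ms. est_weights c R w \<and> shot_alloc M R Ms}"

end

theory Submission
  imports Defs
begin

text \<open>
In the zero-covariance model a disjoint grouping with group weights \<open>S\<^sub>j = \<Sum>c\<^sub>i\<^sup>2\<close>
has \<open>Var\<^sup>* = (\<Sum>\<^sub>j sqrt S\<^sub>j)\<^sup>2 / M\<close> (Cauchy-Schwarz, with shots proportional to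
\<open>sqrt S\<^sub>j\<close>), while for any overlapped grouping every term, however its estimate is spread over
groups, contributes at least \<open>c\<^sub>i\<^sup>2 / M\<close>.  Spreading the shots evenly over \<open>m\<close> groups
costs at most a factor \<open>m\<close> more, which gives (ii).

For (i), take \<open>m\<close> pairwise anticommuting leaders with coefficient 2 and \<open>m\<^sup>2\<close>
mutually commuting followers with coefficient 1, each commuting with exactly one leader.  Sorted
insertion sees the leaders first, so each leader opens a group that then collects its \<open>m\<close>
followers: \<open>Var\<^sup>* = m\<^sup>2 (m + 4) / M\<close>.  Putting all followers into one group and each
leader into its own gives \<open>Var\<^sup>* = 9 m\<^sup>2 / M\<close>.
\<close>

section \<open>Commutation of Pauli strings\<close>

definition anticommute1 :: "pauli \<Rightarrow> pauli \<Rightarrow> bool" where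
  "anticommute1 p q \<longleftrightarrow> p \<noteq> PI \<and> q \<noteq> PI \<and> p \<noteq> q"

definition pair_phase :: "pauli \<Rightarrow> pauli \<Rightarrow> bool \<Rightarrow> complex" where
  "pair_phase p q b = phase1 p (flip1 p b) * phase1 q (flip1 q (flip1 p b))"

lemma flip1_commute: "flip1 p (flip1 q b) = flip1 q (flip1 p b)"
  by (cases p; cases q; simp)

lemma pair_phase_swap: "pair_phase p q b = (if anticommute1 p q then -1 else 1) * pair_phase q p b"
  unfolding pair_phase_def anticommute1_def by (cases p; cases q; cases b) simp_all

lemma pair_phase_nonzero: "pair_phase p q b \<noteq> 0"
proof -
  have "phase1 p b \<noteq> 0" for p b by (cases p; cases b) simp_all
  then show ?thesis unfolding pair_phase_def by simp
qed

lemma pauli_op_pauli_op: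
  assumes "length P = n" "length Q = n" "length x = n"
  shows "pauli_op P (pauli_op Q \<psi>) x =
    (\<Prod>k<n. pair_phase (P!k) (Q!k) (x!k)) * \<psi> (map2 flip1 Q (map2 flip1 P x))"
proof -
  let ?y = "map2 flip1 P x"
  have "pauli_op P (pauli_op Q \<psi>) x = (\<Prod>k<n. phase1 (P!k) (?y!k)) *
     ((\<Prod>k<n. phase1 (Q!k) (map2 flip1 Q ?y ! k)) * \<psi> (map2 flip1 Q ?y))"
    using assms unfolding pauli_op_def Let_def by simp
  also have "\<dots> = (\<Prod>k<n. phase1 (P!k) (?y!k) * phase1 (Q!k) (map2 flip1 Q ?y ! k)) *
      \<psi> (map2 flip1 Q ?y)"
    by (simp add: prod.distrib)
  also have "(\<Prod>k<n. phase1 (P!k) (?y!k) * phase1 (Q!k) (map2 flip1 Q ?y ! k)) =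
      (\<Prod>k<n. pair_phase (P!k) (Q!k) (x!k))"
    using assms by (intro prod.cong) (auto simp: pair_phase_def)
  finally show ?thesis .
qed

lemma commutes_iff_even_anticommuting:
  assumes "length P = n" "length Q = n"
  shows "commutes P Q \<longleftrightarrow> even (card {k. k < n \<and> anticommute1 (P!k) (Q!k)})"
proof -
  define N where "N = card {k. k < n \<and> anticommute1 (P!k) (Q!k)}"
  define F where "F A B x = (\<Prod>k<n. pair_phase (A!k) (B!k) ((x::bool list)!k))" for A B x
  have swap: "F P Q x = (-1) ^ N * F Q P x" for x
  proof -
    have "F P Q x = (\<Prod>k<n. (if anticommute1 (P!k) (Q!k) then -1 else 1)) * F Q P x"
      unfolding F_def by (subst pair_phase_swap) (simp add: prod.distrib)
    also have "(\<Prod>k<n. if anticommute1 (P!k) (Q!k) then -1 else (1::complex)) = (-1) ^ N"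
      by (simp add: prod.If_cases N_def lessThan_def Collect_conj_eq Int_commute)
    finally show ?thesis .
  qed
  have nonzero: "F Q P x \<noteq> 0" for x
    unfolding F_def by (simp add: pair_phase_nonzero)
  have flips_commute: "map2 flip1 Q (map2 flip1 P x) = map2 flip1 P (map2 flip1 Q x)"
    if "length x = n" for x
    using assms that by (intro nth_equalityI) (auto simp: flip1_commute)
  show ?thesis
    unfolding N_def[symmetric]
  proof
    assume "commutes P Q"
    define x where "x = replicate n False"
    have "length x = n" by (simp add: x_def)
    moreover have "pauli_op P (pauli_op Q (\<lambda>_. 1)) x = pauli_op Q (pauli_op P (\<lambda>_. 1)) x"
      using \<open>commutes P Q\<close> unfolding commutes_def by simp
    ultimately have "F P Q x = F Q P x"
      using assms by (simp add: pauli_op_pauli_op F_def)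
    then have "(-1::complex) ^ N = 1"
      using swap[of x] nonzero[of x] by simp
    then show "even N" by (auto simp: minus_one_power_iff split: if_splits)
  next
    assume "even N"
    show "commutes P Q" unfolding commutes_def
    proof (intro allI ext)
      fix \<psi> x
      show "pauli_op P (pauli_op Q \<psi>) x = pauli_op Q (pauli_op P \<psi>) x"
      proof (cases "length x = n")
        case True
        then show ?thesis
          using assms swap[of x] \<open>even N\<close> flips_commute
          by (simp add: pauli_op_pauli_op F_def)
      next
        case False
        then show ?thesis using assms by (simp add: pauli_op_def)
      qed
    qed
  qed
qed

lemma commutes_sym: "commutes P Q \<Longrightarrow> commutes Q P"
  unfolding commutes_def by metis

lemma commutes_refl: "commutes P P"
  unfolding commutes_def by simp

section \<open>Optimal estimator variance\<close>

definition group_weight :: "(pstring \<Rightarrow> real) \<Rightarrow> pstring set \<Rightarrow> real" where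
  "group_weight c g = (\<Sum>P\<in>g. (c P)\<^sup>2)"

lemma group_weight_pos:
  assumes "finite g" "g \<noteq> {}" "g \<subseteq> supp c"
  shows "0 < group_weight c g"
proof -
  obtain P where "P \<in> g" using assms(2) by blast
  then have "0 < (c P)\<^sup>2" using assms(3) by (auto simp: supp_def)
  also have "\<dots> \<le> group_weight c g"
    unfolding group_weight_def using \<open>P \<in> g\<close> assms(1) by (intro member_le_sum) auto
  finally show ?thesis .
qed

lemma sum_squares_div_ge:
  fixes w x :: "'i \<Rightarrow> real"
  assumes "finite I" "\<And>i. i \<in> I \<Longrightarrow> 0 < x i"
  shows "(\<Sum>i\<in>I. w i)\<^sup>2 / (\<Sum>i\<in>I. x i) \<le> (\<Sum>i\<in>I. (w i)\<^sup>2 / x i)"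
proof -
  \<comment> \<open>at this slope the tangent-line bounds below add up exactly to the left-hand side\<close>
  define t where "t = (\<Sum>i\<in>I. w i) / (\<Sum>i\<in>I. x i)"
  have tangent: "2 * w i * t - x i * t\<^sup>2 \<le> (w i)\<^sup>2 / x i" if "i \<in> I" for i
  proof -
    have "(w i)\<^sup>2 / x i - (2 * w i * t - x i * t\<^sup>2) = (w i - x i * t)\<^sup>2 / x i"
      using assms(2)[OF that] by (simp add: power2_eq_square field_simps)
    moreover have "0 \<le> (w i - x i * t)\<^sup>2 / x i" using assms(2)[OF that] by simp
    ultimately show ?thesis by linarith
  qed
  have "(\<Sum>i\<in>I. w i)\<^sup>2 / (\<Sum>i\<in>I. x i) = 2 * (\<Sum>i\<in>I. w i) * t - (\<Sum>i\<in>I. x i) * t\<^sup>2"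
    unfolding t_def by (cases "(\<Sum>i\<in>I. x i) = 0") (simp_all add: power2_eq_square field_simps)
  also have "\<dots> = (\<Sum>i\<in>I. 2 * w i * t - x i * t\<^sup>2)"
    by (simp add: sum_subtractf sum_distrib_left sum_distrib_right)
  also have "\<dots> \<le> (\<Sum>i\<in>I. (w i)\<^sup>2 / x i)"
    using tangent by (rule sum_mono)
  finally show ?thesis .
qed

lemma Gamma_subset: "Gamma R P \<subseteq> {..<length R}"
  unfolding Gamma_def by auto

lemma finite_Gamma: "finite (Gamma R P)"
  using Gamma_subset finite_subset by blast

lemma Gamma_nonempty:
  assumes "overlapped_grouping c R" "P \<in> supp c"
  shows "Gamma R P \<noteq> {}"
  using assms unfolding overlapped_grouping_def Gamma_def
  by (metis (mono_tags) UnionE empty_Collect_eq in_set_conv_nth)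

lemma shot_alloc_sum_Gamma:
  assumes "shot_alloc M R Ms"
  shows "(\<Sum>j\<in>Gamma R P. Ms j) \<le> M"
proof -
  have "(\<Sum>j\<in>Gamma R P. Ms j) \<le> (\<Sum>j<length R. Ms j)"
    using assms Gamma_subset by (intro sum_mono2) (auto simp: shot_alloc_def)
  then show ?thesis using assms by (simp add: shot_alloc_def)
qed

lemma est_var_nonneg:
  assumes "shot_alloc M R Ms"
  shows "0 \<le> est_var c R w Ms"
  unfolding est_var_def
  using assms Gamma_subset by (fastforce simp: shot_alloc_def intro!: sum_nonneg mult_nonneg_nonneg)

lemma VarStar_le_est_var:
  assumes "est_weights c R w" "shot_alloc M R Ms"
  shows "VarStar M c R \<le> est_var c R w Ms"
  unfolding VarStar_def using assms
  by (intro cInf_lower bdd_belowI[of _ 0]) (auto intro: est_var_nonneg)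

lemma VarStar_greatest:
  assumes "est_weights c R w0" "shot_alloc M R Ms0"
    and "\<And>w Ms. est_weights c R w \<Longrightarrow> shot_alloc M R Ms \<Longrightarrow> L \<le> est_var c R w Ms"
  shows "L \<le> VarStar M c R"
  unfolding VarStar_def using assms by (intro cInf_greatest) blast+

lemma uniform_admissible:
  assumes "overlapped_grouping c R" "supp c \<noteq> {}" "M > 0"
  shows "est_weights c R (\<lambda>P j. 1 / card (Gamma R P))"
    and "shot_alloc M R (\<lambda>_. M / length R)"
proof -
  show "est_weights c R (\<lambda>P j. 1 / card (Gamma R P))"
    unfolding est_weights_def
    using Gamma_nonempty[OF assms(1)] finite_Gamma by simp
  have "R \<noteq> []" using assms(1,2) by (auto simp: overlapped_grouping_def)
  then show "shot_alloc M R (\<lambda>_. M / length R)"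
    using assms(3) by (simp add: shot_alloc_def)
qed

lemma est_var_ge:
  assumes "est_weights c R w" "shot_alloc M R Ms" "M > 0"
  shows "group_weight c (supp c) / M \<le> est_var c R w Ms"
proof -
  have term_ge: "1 / M \<le> (\<Sum>j\<in>Gamma R P. (w P j)\<^sup>2 / Ms j)" if "P \<in> supp c" for P
  proof -
    have sum_w: "(\<Sum>j\<in>Gamma R P. w P j) = 1"
      using assms(1) that by (simp add: est_weights_def)
    have pos: "0 < Ms j" if "j \<in> Gamma R P" for j
      using assms(2) that Gamma_subset by (auto simp: shot_alloc_def)
    then have "0 < (\<Sum>j\<in>Gamma R P. Ms j)"
      using sum_w finite_Gamma by (metis sum.empty sum_pos zero_neq_one)
    then have "1 / M \<le> (\<Sum>j\<in>Gamma R P. w P j)\<^sup>2 / (\<Sum>j\<in>Gamma R P. Ms j)"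
      using shot_alloc_sum_Gamma[OF assms(2)] sum_w by (simp add: frac_le)
    also have "\<dots> \<le> (\<Sum>j\<in>Gamma R P. (w P j)\<^sup>2 / Ms j)"
      using finite_Gamma pos by (rule sum_squares_div_ge)
    finally show ?thesis .
  qed
  have "group_weight c (supp c) / M = (\<Sum>P\<in>supp c. (c P)\<^sup>2 * (1 / M))"
    by (simp add: group_weight_def sum_divide_distrib)
  also have "\<dots> \<le> est_var c R w Ms"
    unfolding est_var_def using term_ge by (intro sum_mono mult_left_mono) auto
  finally show ?thesis .
qed

lemma VarStar_ge:
  assumes "overlapped_grouping c R" "supp c \<noteq> {}" "M > 0"
  shows "group_weight c (supp c) / M \<le> VarStar M c R"
  by (rule VarStar_greatest[OF uniform_admissible[OF assms]]) (rule est_var_ge[OF _ _ assms(3)])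

lemma VarStar_le_length:
  assumes "overlapped_grouping c G" "supp c \<noteq> {}" "M > 0"
  shows "VarStar M c G \<le> real (length G) * group_weight c (supp c) / M"
proof -
  note adm = uniform_admissible[OF assms]
  have "length G > 0" using adm(2) assms(3) by (auto simp: shot_alloc_def)
  have term_le: "(\<Sum>j\<in>Gamma G P. (1 / card (Gamma G P))\<^sup>2 / (M / length G)) \<le> length G / M"
    if "P \<in> supp c" for P
  proof -
    have "1 \<le> card (Gamma G P)"
      using Gamma_nonempty[OF assms(1) that] finite_Gamma by (simp add: Suc_le_eq card_gt_0_iff)
    then show ?thesis
      using assms(3) \<open>length G > 0\<close> by (simp add: power2_eq_square field_simps)
  qed
  have "VarStar M c G \<le> est_var c G (\<lambda>P j. 1 / card (Gamma G P)) (\<lambda>_. M / length G)"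
    using adm by (rule VarStar_le_est_var)
  also have "\<dots> \<le> (\<Sum>P\<in>supp c. (c P)\<^sup>2 * (length G / M))"
    unfolding est_var_def using term_le by (intro sum_mono mult_left_mono) auto
  also have "\<dots> = real (length G) * group_weight c (supp c) / M"
    by (simp only: group_weight_def sum_distrib_right[symmetric]) simp
  finally show ?thesis .
qed

lemma VarStar_ratio_le_length:
  assumes "pauli_hamiltonian n c" "overlapped_grouping c G" "overlapped_grouping c R" "M > 0"
  shows "VarStar M c G / VarStar M c R \<le> real (length G)"
proof -
  let ?S = "group_weight c (supp c)"
  have ne: "supp c \<noteq> {}" and fin: "finite (supp c)"
    using assms(1) by (auto simp: pauli_hamiltonian_def)
  have R: "?S / M \<le> VarStar M c R" using VarStar_ge[OF assms(3) ne assms(4)] .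
  have "0 < ?S / M" using group_weight_pos[OF fin ne] assms(4) by simp
  with R have "0 < VarStar M c R" by linarith
  have "VarStar M c G \<le> real (length G) * (?S / M)"
    using VarStar_le_length[OF assms(2) ne assms(4)] by simp
  also have "\<dots> \<le> real (length G) * VarStar M c R"
    using R by (rule mult_left_mono) simp
  finally show ?thesis using \<open>0 < VarStar M c R\<close> by (simp add: pos_divide_le_eq)
qed

lemma Gamma_grouping:
  assumes "grouping c G" "j < length G" "P \<in> G ! j"
  shows "Gamma G P = {j}"
  using assms unfolding grouping_def Gamma_def by auto

lemma est_weights_grouping:
  assumes "grouping c G"
  shows "est_weights c G (\<lambda>_ _. 1)"
  unfolding est_weights_def
proof
  fix P assume "P \<in> supp c"
  then obtain j where "j \<in> Gamma G P"
    using Gamma_nonempty assms by (fastforce simp: grouping_def)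
  then have "Gamma G P = {j}"
    using Gamma_grouping[OF assms] by (simp add: Gamma_def)
  then show "(\<Sum>j\<in>Gamma G P. 1) = (1::real)" by simp
qed

lemma est_var_grouping:
  assumes G: "grouping c G" and fin: "finite (supp c)" and w: "est_weights c G w"
  shows "est_var c G w Ms = (\<Sum>j<length G. group_weight c (G ! j) / Ms j)"
proof -
  have sub: "G ! j \<subseteq> supp c" if "j < length G" for j
    using G that by (simp add: grouping_def overlapped_grouping_def)
  have "set G = (!) G ` {..<length G}" by (auto simp: in_set_conv_nth)
  then have supp_eq: "supp c = (\<Union>j<length G. G ! j)"
    using G by (simp add: grouping_def overlapped_grouping_def)
  have summand: "(c P)\<^sup>2 * (\<Sum>i\<in>Gamma G P. (w P i)\<^sup>2 / Ms i) = (c P)\<^sup>2 / Ms j"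
    if "j < length G" "P \<in> G ! j" for j P
  proof -
    have "P \<in> supp c" using sub that by blast
    with w have "(\<Sum>i\<in>Gamma G P. w P i) = 1" by (simp add: est_weights_def)
    then have "w P j = 1" using Gamma_grouping[OF G that] by simp
    then show ?thesis using Gamma_grouping[OF G that] by simp
  qed
  have "est_var c G w Ms = (\<Sum>j<length G. \<Sum>P\<in>G ! j. (c P)\<^sup>2 * (\<Sum>i\<in>Gamma G P. (w P i)\<^sup>2 / Ms i))"
    unfolding est_var_def supp_eq using G sub fin
    by (intro sum.UNION_disjoint) (auto simp: grouping_def intro: finite_subset)
  also have "\<dots> = (\<Sum>j<length G. group_weight c (G ! j) / Ms j)"
    using summand by (simp add: group_weight_def sum_divide_distrib)
  finally show ?thesis .
qed

lemma VarStar_grouping_ge: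
  assumes G: "grouping c G" and fin: "finite (supp c)" "supp c \<noteq> {}" and M: "M > 0"
  shows "(\<Sum>j<length G. sqrt (group_weight c (G ! j)))\<^sup>2 / M \<le> VarStar M c G"
proof -
  have og: "overlapped_grouping c G" using G by (simp add: grouping_def)
  show ?thesis
  proof (rule VarStar_greatest[OF uniform_admissible[OF og fin(2) M]])
    fix w Ms assume w: "est_weights c G w" and alloc: "shot_alloc M G Ms"
    have "0 \<le> group_weight c g" for g by (simp add: group_weight_def sum_nonneg)
    then have "(\<Sum>j<length G. sqrt (group_weight c (G ! j)))\<^sup>2 / M =
        (\<Sum>j<length G. sqrt (group_weight c (G ! j)))\<^sup>2 / (\<Sum>j<length G. Ms j)"
      using alloc by (simp add: shot_alloc_def)
    also have "\<dots> \<le> (\<Sum>j<length G. (sqrt (group_weight c (G ! j)))\<^sup>2 / Ms j)"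
      using alloc by (intro sum_squares_div_ge) (auto simp: shot_alloc_def)
    also have "\<dots> = est_var c G w Ms"
      using \<open>0 \<le> group_weight c _\<close> by (simp add: est_var_grouping[OF G fin(1) w])
    finally show "(\<Sum>j<length G. sqrt (group_weight c (G ! j)))\<^sup>2 / M \<le> est_var c G w Ms" .
  qed
qed

lemma VarStar_grouping_le:
  assumes G: "grouping c G" "G \<noteq> []" "\<forall>g\<in>set G. g \<noteq> {}"
    and fin: "finite (supp c)" and M: "M > 0"
  shows "VarStar M c G \<le> (\<Sum>j<length G. sqrt (group_weight c (G ! j)))\<^sup>2 / M"
proof -
  define S where "S j = group_weight c (G ! j)" for j
  define T where "T = (\<Sum>j<length G. sqrt (S j))"
  have S_pos: "0 < S j" if "j < length G" for j
    unfolding S_def using G(1,3) fin that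
    by (intro group_weight_pos)
      (auto simp: grouping_def overlapped_grouping_def intro: finite_subset)
  have "0 < T" unfolding T_def using G(2) S_pos by (intro sum_pos) auto
  define Ms where "Ms j = M * sqrt (S j) / T" for j
  have alloc: "shot_alloc M G Ms"
    using S_pos \<open>0 < T\<close> M
    by (auto simp: shot_alloc_def Ms_def T_def
        sum_divide_distrib[symmetric] sum_distrib_left[symmetric])
  have "VarStar M c G \<le> est_var c G (\<lambda>_ _. 1) Ms"
    using est_weights_grouping[OF G(1)] alloc by (rule VarStar_le_est_var)
  also have "\<dots> = (\<Sum>j<length G. sqrt (S j) * T / M)"
    unfolding est_var_grouping[OF G(1) fin est_weights_grouping[OF G(1)]] S_def[symmetric]
  proof (intro sum.cong refl)
    fix j assume "j \<in> {..<length G}"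
    then have "0 < S j" using S_pos by simp
    define r where "r = sqrt (S j)"
    have "0 < r" "S j = r * r" using \<open>0 < S j\<close> by (auto simp: r_def)
    then show "S j / Ms j = sqrt (S j) * T / M"
      unfolding Ms_def r_def[symmetric] using M \<open>0 < T\<close> by (simp add: field_simps)
  qed
  also have "\<dots> = T\<^sup>2 / M"
    unfolding T_def by (simp add: power2_eq_square sum_distrib_right sum_divide_distrib)
  finally show ?thesis by (simp add: T_def S_def)
qed

theorem VarStar_grouping:
  assumes "grouping c G" "G \<noteq> []" "\<forall>g\<in>set G. g \<noteq> {}" "finite (supp c)" "M > 0"
  shows "VarStar M c G = (\<Sum>j<length G. sqrt (group_weight c (G ! j)))\<^sup>2 / M"
proof (rule antisym)
  show "VarStar M c G \<le> (\<Sum>j<length G. sqrt (group_weight c (G ! j)))\<^sup>2 / M"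
    using assms by (rule VarStar_grouping_le)
  have "supp c \<noteq> {}"
    using assms(1-3) by (auto simp: grouping_def overlapped_grouping_def neq_Nil_conv)
  then show "(\<Sum>j<length G. sqrt (group_weight c (G ! j)))\<^sup>2 / M \<le> VarStar M c G"
    using assms(1,4,5) by (intro VarStar_grouping_ge)
qed

section \<open>Sorted insertion with leaders and followers\<close>

lemma si_insert_new_group:
  assumes "\<forall>g\<in>set L. \<exists>Q\<in>g. \<not> commutes Q x"
  shows "si_insert L x = L @ [{x}]"
  using assms by (induction L) auto

lemma si_insert_first_fit:
  assumes "\<forall>g\<in>set L1. \<exists>Q\<in>g. \<not> commutes Q x" "\<forall>Q\<in>g. commutes Q x"
  shows "si_insert (L1 @ g # L2) x = L1 @ insert x g # L2"
  using assms by (induction L1) auto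

lemma si_order_precedes:
  assumes "si_order c ord" "ord = ys @ Q # zs" "P \<in> supp c" "\<bar>c Q\<bar> < \<bar>c P\<bar>"
  shows "P \<in> set ys"
proof -
  have "P \<in> set ys \<union> {Q} \<union> set zs" using assms(1-3) by (auto simp: si_order_def)
  moreover have "\<bar>c Q\<bar> \<ge> \<bar>c P\<bar>" if "P \<in> set zs"
    using assms(1,2) that by (auto simp: si_order_def sorted_wrt_append)
  ultimately show ?thesis using assms(4) by auto
qed

lemma si_order_exists:
  assumes "finite (supp c)"
  shows "\<exists>ord. si_order c ord"
proof -
  obtain xs where xs: "set xs = supp c" "distinct xs"
    using finite_distinct_list[OF assms] by blast
  define ord where "ord = sort_key (\<lambda>P. - \<bar>c P\<bar>) xs"
  have "sorted_wrt (\<lambda>P Q. - \<bar>c P\<bar> \<le> - \<bar>c Q\<bar>) ord"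
    using sorted_sort_key[of "\<lambda>P. - \<bar>c P\<bar>" xs] by (simp add: ord_def sorted_map)
  then have "sorted_wrt (\<lambda>P Q. \<bar>c P\<bar> \<ge> \<bar>c Q\<bar>) ord"
    by (rule sorted_wrt_mono_rel[rotated]) auto
  then have "si_order c ord" using xs by (simp add: si_order_def ord_def)
  then show ?thesis by blast
qed

locale leaders_followers =
  fixes A B :: "pstring set"
  assumes disjoint: "A \<inter> B = {}"
    and leaders_noncommuting: "\<lbrakk>a \<in> A; a' \<in> A; a \<noteq> a'\<rbrakk> \<Longrightarrow> \<not> commutes a a'"
    and unique_leader: "\<lbrakk>b \<in> B; a \<in> A; a' \<in> A; commutes a b; commutes a' b\<rbrakk> \<Longrightarrow> a = a'"
    and followers_commuting: "\<lbrakk>b \<in> B; b' \<in> B\<rbrakk> \<Longrightarrow> commutes b b'"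
begin

definition leader_group :: "pstring set \<Rightarrow> pstring \<Rightarrow> pstring set" where
  "leader_group X a = insert a {b \<in> B \<inter> X. commutes a b}"

definition leader_groups :: "pstring list \<Rightarrow> pstring set list" where
  "leader_groups xs = map (leader_group (set xs)) (filter (\<lambda>P. P \<in> A) xs)"

definition leaders_precede :: "pstring list \<Rightarrow> bool" where
  "leaders_precede xs \<longleftrightarrow>
     (\<forall>ys b zs. xs = ys @ b # zs \<longrightarrow> b \<in> B \<longrightarrow> (\<exists>a\<in>A \<inter> set ys. commutes a b))"

lemma leaders_precede_butlast: "leaders_precede (xs @ [x]) \<Longrightarrow> leaders_precede xs"
  unfolding leaders_precede_def by (metis append.assoc append_Cons)

lemma si_insert_leader:
  assumes "x \<in> A" "x \<notin> set xs" "leaders_precede xs"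
  shows "si_insert (leader_groups xs) x = leader_groups (xs @ [x])"
proof -
  have "\<forall>g\<in>set (leader_groups xs). \<exists>Q\<in>g. \<not> commutes Q x"
  proof
    fix g assume "g \<in> set (leader_groups xs)"
    then obtain a where "a \<in> A" "a \<in> set xs" "g = leader_group (set xs) a"
      by (auto simp: leader_groups_def)
    moreover have "\<not> commutes a x"
      using leaders_noncommuting[OF \<open>a \<in> A\<close> assms(1)] \<open>a \<in> set xs\<close> assms(2) by blast
    ultimately show "\<exists>Q\<in>g. \<not> commutes Q x" by (auto simp: leader_group_def)
  qed
  then have "si_insert (leader_groups xs) x = leader_groups xs @ [{x}]"
    by (rule si_insert_new_group)
  moreover have "leader_group (insert x (set xs)) a = leader_group (set xs) a" for a
    using assms(1) disjoint by (auto simp: leader_group_def)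
  moreover have "leader_group (set xs) x = {x}"
  proof -
    have "\<not> commutes x b" if "b \<in> B" "b \<in> set xs" for b
    proof
      assume "commutes x b"
      obtain ys zs where split: "xs = ys @ b # zs" using \<open>b \<in> set xs\<close> by (meson split_list)
      with assms(3) \<open>b \<in> B\<close> obtain a where "a \<in> A" "a \<in> set ys" "commutes a b"
        unfolding leaders_precede_def by blast
      moreover have "a = x"
        using unique_leader[OF \<open>b \<in> B\<close> \<open>a \<in> A\<close> assms(1) \<open>commutes a b\<close> \<open>commutes x b\<close>] .
      ultimately show False using assms(2) split by simp
    qed
    then show ?thesis by (auto simp: leader_group_def)
  qed
  ultimately show ?thesis using assms(1) by (simp add: leader_groups_def)
qed

lemma si_insert_follower:
  assumes "x \<in> B" "distinct xs" "a0 \<in> A" "a0 \<in> set xs" "commutes a0 x"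
  shows "si_insert (leader_groups xs) x = leader_groups (xs @ [x])"
proof -
  have "a0 \<in> set (filter (\<lambda>P. P \<in> A) xs)" using assms(3,4) by simp
  then obtain ys1 ys2 where split: "filter (\<lambda>P. P \<in> A) xs = ys1 @ a0 # ys2"
    by (meson split_list)
  have "distinct (ys1 @ a0 # ys2)" using assms(2) split by (metis distinct_filter)
  have other: "a \<in> A \<and> \<not> commutes a x" if "a \<in> set ys1 \<union> set ys2" for a
  proof -
    have "a \<in> set (filter (\<lambda>P. P \<in> A) xs)" using that split by auto
    moreover have "a \<noteq> a0" using that \<open>distinct (ys1 @ a0 # ys2)\<close> by auto
    ultimately show ?thesis using unique_leader[OF assms(1) _ assms(3) _ assms(5)] by auto
  qed
  have "si_insert (leader_groups xs) x =
      map (leader_group (set xs)) ys1 @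
      insert x (leader_group (set xs) a0) # map (leader_group (set xs)) ys2"
    unfolding leader_groups_def split list.map map_append
  proof (rule si_insert_first_fit)
    show "\<forall>g\<in>set (map (leader_group (set xs)) ys1). \<exists>Q\<in>g. \<not> commutes Q x"
      using other by (auto simp: leader_group_def)
    show "\<forall>Q\<in>leader_group (set xs) a0. commutes Q x"
      using assms(1,5) followers_commuting by (auto simp: leader_group_def)
  qed
  moreover have "leader_group (set (xs @ [x])) a = leader_group (set xs) a"
    if "a \<in> set ys1 \<union> set ys2" for a
    using other[OF that] by (auto simp: leader_group_def dest: commutes_sym)
  moreover have "leader_group (set (xs @ [x])) a0 = insert x (leader_group (set xs) a0)"
    using assms(1,5) by (auto simp: leader_group_def)
  moreover have "x \<notin> A" using assms(1) disjoint by blast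
  ultimately show ?thesis using split by (simp add: leader_groups_def)
qed

lemma sorted_insertion_leader_groups:
  assumes "distinct ord" "set ord \<subseteq> A \<union> B" "leaders_precede ord"
  shows "sorted_insertion ord = leader_groups ord"
  unfolding sorted_insertion_def using assms
proof (induction ord rule: rev_induct)
  case Nil
  then show ?case by (simp add: leader_groups_def)
next
  case (snoc x xs)
  then have IH: "foldl si_insert [] xs = leader_groups xs"
    using leaders_precede_butlast by simp
  show ?case
  proof (cases "x \<in> A")
    case True
    then show ?thesis
      using IH snoc.prems si_insert_leader leaders_precede_butlast by simp
  next
    case False
    then have "x \<in> B" using snoc.prems(2) by auto
    then obtain a0 where "a0 \<in> A" "a0 \<in> set xs" "commutes a0 x"
      using snoc.prems(3) unfolding leaders_precede_def by blast
    then show ?thesis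
      using IH snoc.prems si_insert_follower[OF \<open>x \<in> B\<close>] by simp
  qed
qed

lemma grouping_leader_groups:
  assumes "distinct ord" "set ord = A \<union> B" "supp c = A \<union> B" "\<forall>b\<in>B. \<exists>a\<in>A. commutes a b"
  shows "grouping c (leader_groups ord)"
    and "length (leader_groups ord) = card A"
proof -
  define L where "L = filter (\<lambda>P. P \<in> A) ord"
  have L: "distinct L" "set L = A" using assms(1,2) by (auto simp: L_def)
  have groups: "leader_groups ord = map (leader_group (A \<union> B)) L"
    using assms(2) by (simp add: leader_groups_def L_def)
  show "length (leader_groups ord) = card A"
    using groups L by (simp add: distinct_card[symmetric])
  let ?G = "map (leader_group (A \<union> B)) L"
  show "grouping c (leader_groups ord)"
    unfolding grouping_def overlapped_grouping_def groups
  proof (intro conjI allI impI)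
    fix j assume "j < length ?G"
    then have "L ! j \<in> A" using L(2) by (metis length_map nth_mem)
    then show "?G ! j \<subseteq> supp c" and "commuting_set (?G ! j)"
      using \<open>j < _\<close> assms(3) followers_commuting
      by (auto simp: leader_group_def commuting_set_def commutes_refl dest: commutes_sym)
  next
    show "\<Union> (set ?G) = supp c"
      using L assms(3,4) by (auto simp: leader_group_def)
  next
    fix i j assume "i < length ?G" "j < length ?G" "i \<noteq> j"
    then have "L ! i \<noteq> L ! j" "L ! i \<in> A" "L ! j \<in> A"
      using L by (auto simp: nth_eq_iff_index_eq nth_mem)
    then show "?G ! i \<inter> ?G ! j = {}"
      using \<open>i < _\<close> \<open>j < _\<close> disjoint unique_leader by (auto simp: leader_group_def)
  qed
qed

end

section \<open>A family on which sorted insertion is far from optimal\<close>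

text \<open>The last \<open>m\<close> qubits only serve to make the \<open>m\<close> followers of each leader distinct.\<close>

definition leader :: "nat \<Rightarrow> nat \<Rightarrow> pstring" where
  "leader m j = map (\<lambda>p. if p < j then PZ else if p = j then PX else PI) [0..<2*m]"

definition follower :: "nat \<Rightarrow> nat \<Rightarrow> nat \<Rightarrow> pstring" where
  "follower m j l =
     map (\<lambda>p. if p < m then (if p = j then PI else PZ) else if p = m + l then PZ else PI) [0..<2*m]"

lemma length_leader [simp]: "length (leader m j) = 2*m"
  by (simp add: leader_def)

lemma length_follower [simp]: "length (follower m j l) = 2*m"
  by (simp add: follower_def)

lemma nth_leader: "p < 2*m \<Longrightarrow> leader m j ! p = (if p < j then PZ else if p = j then PX else PI)"
  by (simp add: leader_def)

lemma nth_follower: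
  "p < 2*m \<Longrightarrow> follower m j l ! p =
     (if p < m then (if p = j then PI else PZ) else if p = m + l then PZ else PI)"
  by (simp add: follower_def)

lemma not_commutes_leader_leader:
  assumes "i < m" "j < m" "i \<noteq> j"
  shows "\<not> commutes (leader m i) (leader m j)"
proof -
  have "{k. k < 2*m \<and> anticommute1 (leader m i ! k) (leader m j ! k)} = {min i j}"
    using assms by (auto simp: nth_leader anticommute1_def split: if_splits)
  then show ?thesis by (simp add: commutes_iff_even_anticommuting[of _ "2*m"])
qed

lemma commutes_leader_follower_iff:
  assumes "j < m" "j' < m"
  shows "commutes (leader m j) (follower m j' l) \<longleftrightarrow> j = j'"
proof -
  have "{k. k < 2*m \<and> anticommute1 (leader m j ! k) (follower m j' l ! k)} =
      (if j = j' then {} else {j})"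
    using assms by (auto simp: nth_leader nth_follower anticommute1_def split: if_splits)
  then show ?thesis by (simp add: commutes_iff_even_anticommuting[of _ "2*m"])
qed

lemma commutes_follower_follower: "commutes (follower m j l) (follower m j' l')"
proof -
  have none: "{k. k < 2*m \<and> anticommute1 (follower m j l ! k) (follower m j' l' ! k)} = {}"
    by (auto simp: nth_follower anticommute1_def split: if_splits)
  show ?thesis
    unfolding commutes_iff_even_anticommuting[OF length_follower length_follower] none by simp
qed

lemma inj_on_leader: "inj_on (leader m) {..<m}"
proof (rule inj_onI)
  fix i j assume "i \<in> {..<m}" "j \<in> {..<m}" "leader m i = leader m j"
  then have "leader m i ! min i j = leader m j ! min i j" by simp
  with \<open>i \<in> {..<m}\<close> \<open>j \<in> {..<m}\<close> show "i = j"
    by (auto simp: nth_leader min_def split: if_splits)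
qed

lemma inj_on_follower: "inj_on (\<lambda>(j, l). follower m j l) ({..<m} \<times> {..<m})"
proof (rule inj_onI, clarsimp)
  fix j l j' l' assume jl: "j < m" "l < m" "j' < m" "l' < m" "follower m j l = follower m j' l'"
  then have "follower m j l ! j = follower m j' l' ! j"
    and "follower m j l ! (m + l) = follower m j' l' ! (m + l)"
    by simp_all
  with jl(1-4) show "j = j' \<and> l = l'" by (auto simp: nth_follower split: if_splits)
qed

lemma leader_ne_follower:
  assumes "j < m"
  shows "leader m j \<noteq> follower m j' l"
proof -
  have "leader m j ! j = PX" "follower m j' l ! j \<noteq> PX"
    using assms by (simp_all add: nth_leader nth_follower)
  then show ?thesis by metis
qed

definition leaders :: "nat \<Rightarrow> pstring set" where
  "leaders m = leader m ` {..<m}"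

definition followers :: "nat \<Rightarrow> pstring set" where
  "followers m = (\<lambda>(j, l). follower m j l) ` ({..<m} \<times> {..<m})"

definition example_coeff :: "nat \<Rightarrow> pstring \<Rightarrow> real" where
  "example_coeff m P = (if P \<in> leaders m then 2 else if P \<in> followers m then 1 else 0)"

definition example_cover :: "nat \<Rightarrow> pstring set list" where
  "example_cover m = followers m # map (\<lambda>j. {leader m j}) [0..<m]"

lemma leaders_followers_disjoint: "leaders m \<inter> followers m = {}"
  using leader_ne_follower by (fastforce simp: leaders_def followers_def)

lemma card_leaders: "card (leaders m) = m"
  by (simp add: leaders_def card_image inj_on_leader)

lemma card_followers: "card (followers m) = m * m"
  by (simp add: followers_def card_image inj_on_follower card_cartesian_product)

lemma supp_example_coeff: "supp (example_coeff m) = leaders m \<union> followers m"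
  by (auto simp: supp_def example_coeff_def)

lemma example_coeff_leader: "j < m \<Longrightarrow> example_coeff m (leader m j) = 2"
  by (simp add: example_coeff_def leaders_def)

lemma example_coeff_follower: "j < m \<Longrightarrow> l < m \<Longrightarrow> example_coeff m (follower m j l) = 1"
  using leaders_followers_disjoint by (fastforce simp: example_coeff_def followers_def)

lemma pauli_hamiltonian_example: "m > 0 \<Longrightarrow> pauli_hamiltonian (2*m) (example_coeff m)"
  by (auto simp: pauli_hamiltonian_def supp_example_coeff leaders_def followers_def)

interpretation example: leaders_followers "leaders m" "followers m"
proof
  show "leaders m \<inter> followers m = {}" by (rule leaders_followers_disjoint)
next
  fix a a' assume "a \<in> leaders m" "a' \<in> leaders m" "a \<noteq> a'"
  then show "\<not> commutes a a'" using not_commutes_leader_leader by (auto simp: leaders_def)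
next
  fix b a a'
  assume "b \<in> followers m" "a \<in> leaders m" "a' \<in> leaders m" "commutes a b" "commutes a' b"
  then show "a = a'" using commutes_leader_follower_iff by (auto simp: leaders_def followers_def)
next
  fix b b' assume "b \<in> followers m" "b' \<in> followers m"
  then show "commutes b b'" using commutes_follower_follower by (auto simp: followers_def)
qed

lemma example_leader_group:
  assumes "j < m"
  shows "example.leader_group m (leaders m \<union> followers m) (leader m j) =
    insert (leader m j) (follower m j ` {..<m})"
  unfolding example.leader_group_def
  using assms commutes_leader_follower_iff by (auto simp: followers_def)

lemma group_weight_example_leader_group:
  assumes "j < m"
  shows "group_weight (example_coeff m) (insert (leader m j) (follower m j ` {..<m})) = m + 4"
proof -
  have "inj_on (follower m j) {..<m}"
    using inj_on_follower[of m] assms by (auto simp: inj_on_def)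
  moreover have "leader m j \<notin> follower m j ` {..<m}"
    using leader_ne_follower[OF assms] by blast
  ultimately show ?thesis
    using assms
    by (simp add: group_weight_def sum.reindex example_coeff_leader example_coeff_follower)
qed

lemma example_leaders_precede:
  assumes "si_order (example_coeff m) ord"
  shows "example.leaders_precede m ord"
  unfolding example.leaders_precede_def
proof (intro allI impI)
  fix ys b zs assume "ord = ys @ b # zs" "b \<in> followers m"
  then obtain j l where "j < m" "l < m" "b = follower m j l" by (auto simp: followers_def)
  then have "leader m j \<in> set ys"
    using si_order_precedes[OF assms \<open>ord = ys @ b # zs\<close>, of "leader m j"]
    by (simp add: supp_example_coeff leaders_def example_coeff_leader example_coeff_follower)
  moreover have "commutes (leader m j) b"
    using \<open>j < m\<close> \<open>b = follower m j l\<close> commutes_leader_follower_iff by simp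
  ultimately show "\<exists>a\<in>leaders m \<inter> set ys. commutes a b"
    using \<open>j < m\<close> by (auto simp: leaders_def)
qed

lemma example_sorted_insertion:
  assumes "si_order (example_coeff m) ord"
  shows "grouping (example_coeff m) (sorted_insertion ord)"
    and "length (sorted_insertion ord) = m"
    and "\<forall>g\<in>set (sorted_insertion ord). g \<noteq> {} \<and> group_weight (example_coeff m) g = m + 4"
proof -
  have ord: "distinct ord" "set ord = leaders m \<union> followers m"
    using assms by (simp_all add: si_order_def supp_example_coeff)
  have every_follower_led: "\<forall>b\<in>followers m. \<exists>a\<in>leaders m. commutes a b"
    using commutes_leader_follower_iff by (fastforce simp: leaders_def followers_def)
  have SI: "sorted_insertion ord = example.leader_groups m ord"
    using ord example_leaders_precede[OF assms]
    by (simp add: example.sorted_insertion_leader_groups)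
  note groups = example.grouping_leader_groups[OF ord supp_example_coeff every_follower_led]
  show "grouping (example_coeff m) (sorted_insertion ord)" using SI groups(1) by simp
  show "length (sorted_insertion ord) = m" using SI groups(2) card_leaders by simp
  show "\<forall>g\<in>set (sorted_insertion ord). g \<noteq> {} \<and> group_weight (example_coeff m) g = m + 4"
  proof
    fix g assume "g \<in> set (sorted_insertion ord)"
    then have "g \<in> set (example.leader_groups m ord)" using SI by simp
    then obtain j where "j < m" "g = example.leader_group m (set ord) (leader m j)"
      unfolding example.leader_groups_def by (auto simp: leaders_def)
    then show "g \<noteq> {} \<and> group_weight (example_coeff m) g = m + 4"
      using ord(2) example_leader_group group_weight_example_leader_group by auto
  qed
qed

lemma VarStar_example_sorted_insertion:
  assumes "m > 0" "si_order (example_coeff m) ord" "M > 0"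
  shows "VarStar M (example_coeff m) (sorted_insertion ord) = real m ^ 2 * (m + 4) / M"
proof -
  let ?G = "sorted_insertion ord"
  note SI = example_sorted_insertion[OF assms(2)]
  have "(\<Sum>j<length ?G. sqrt (group_weight (example_coeff m) (?G ! j))) = m * sqrt (m + 4)"
    using SI(2,3) by (simp add: nth_mem)
  moreover have "?G \<noteq> []" using SI(2) assms(1) by auto
  moreover have "finite (supp (example_coeff m))"
    using pauli_hamiltonian_example[OF assms(1)] by (simp add: pauli_hamiltonian_def)
  ultimately show ?thesis
    using VarStar_grouping[OF SI(1) _ _ _ assms(3)] SI(3) by (simp add: power_mult_distrib)
qed

lemma grouping_example_cover: "grouping (example_coeff m) (example_cover m)"
  unfolding grouping_def overlapped_grouping_def
proof (intro conjI allI impI)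
  fix j assume "j < length (example_cover m)"
  then show "example_cover m ! j \<subseteq> supp (example_coeff m)"
    and "commuting_set (example_cover m ! j)"
    using commutes_follower_follower
    by (cases j; auto simp: example_cover_def supp_example_coeff leaders_def followers_def
        commuting_set_def commutes_refl)+
next
  show "\<Union> (set (example_cover m)) = supp (example_coeff m)"
    by (auto simp: example_cover_def supp_example_coeff leaders_def)
next
  fix i j assume "i < length (example_cover m)" "j < length (example_cover m)" "i \<noteq> j"
  then show "example_cover m ! i \<inter> example_cover m ! j = {}"
    using leader_ne_follower inj_on_leader[of m]
    by (cases i; cases j; auto simp: example_cover_def followers_def inj_on_def)
qed

lemma VarStar_example_cover:
  assumes "m > 0" "M > 0"
  shows "VarStar M (example_coeff m) (example_cover m) = 9 * real m ^ 2 / M"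
proof -
  have "group_weight (example_coeff m) (followers m) = (\<Sum>P\<in>followers m. 1)"
    unfolding group_weight_def by (intro sum.cong) (auto simp: followers_def example_coeff_follower)
  then have "group_weight (example_coeff m) (followers m) = m * m"
    by (simp add: card_followers)
  moreover have "group_weight (example_coeff m) {leader m j} = 4" if "j < m" for j
    using that by (simp add: group_weight_def example_coeff_leader)
  ultimately have
    "(\<Sum>j<length (example_cover m). sqrt (group_weight (example_coeff m) (example_cover m ! j))) =
      sqrt (m * m) + (\<Sum>j<m. sqrt 4)"
    by (simp del: sum.lessThan_Suc add: sum.lessThan_Suc_shift example_cover_def)
  also have "\<dots> = 3 * m" by (simp add: real_sqrt_mult)
  moreover have "finite (supp (example_coeff m))" "\<forall>g\<in>set (example_cover m). g \<noteq> {}"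
    using pauli_hamiltonian_example[OF assms(1)] assms(1)
    by (auto simp: pauli_hamiltonian_def example_cover_def followers_def)
  ultimately show ?thesis
    using VarStar_grouping[OF grouping_example_cover _ _ _ assms(2)]
    by (simp add: example_cover_def power_mult_distrib)
qed

lemma example_coeff_bounds:
  "P \<in> supp (example_coeff m) \<Longrightarrow> 1 \<le> \<bar>example_coeff m P\<bar> \<and> \<bar>example_coeff m P\<bar> \<le> 2"
  by (auto simp: supp_def example_coeff_def split: if_splits)

lemma example_variance_ratio:
  assumes "m > 0" "si_order (example_coeff m) ord" "M > 0"
  shows "VarStar M (example_coeff m) (sorted_insertion ord) /
      VarStar M (example_coeff m) (example_cover m) = (m + 4) / 9"
  using assms by (simp add: VarStar_example_sorted_insertion VarStar_example_cover)

lemma sorted_insertion_gap: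
  assumes "m \<ge> 1"
  shows "\<exists>(n::nat) (c::pstring \<Rightarrow> real) R.
    pauli_hamiltonian n c \<and>
    (\<forall>P\<in>supp c. 1 \<le> \<bar>c P\<bar> \<and> \<bar>c P\<bar> \<le> 2) \<and>
    overlapped_grouping c R \<and>
    (\<exists>ord. si_order c ord) \<and>
    (\<forall>ord. si_order c ord \<longrightarrow>
       length (sorted_insertion ord) = m \<and>
       (\<forall>M>0. real m / 9 \<le> VarStar M c (sorted_insertion ord) / VarStar M c R \<and>
              VarStar M c (sorted_insertion ord) / VarStar M c R \<le> real m))"
proof (intro exI[of _ "2*m"] exI[of _ "example_coeff m"] exI[of _ "example_cover m"]
    conjI allI impI)
  show "pauli_hamiltonian (2*m) (example_coeff m)"
    using assms by (simp add: pauli_hamiltonian_example)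
  then show "\<exists>ord. si_order (example_coeff m) ord"
    by (simp add: si_order_exists pauli_hamiltonian_def)
  show "\<forall>P\<in>supp (example_coeff m). 1 \<le> \<bar>example_coeff m P\<bar> \<and> \<bar>example_coeff m P\<bar> \<le> 2"
    using example_coeff_bounds by blast
  show "overlapped_grouping (example_coeff m) (example_cover m)"
    using grouping_example_cover by (simp add: grouping_def)
next
  fix ord assume "si_order (example_coeff m) ord"
  then show "length (sorted_insertion ord) = m" by (rule example_sorted_insertion(2))
next
  fix ord and M :: real assume "si_order (example_coeff m) ord" "M > 0"
  then have "VarStar M (example_coeff m) (sorted_insertion ord) /
      VarStar M (example_coeff m) (example_cover m) = (m + 4) / 9"
    using assms by (simp add: example_variance_ratio)
  then show "real m / 9 \<le> VarStar M (example_coeff m) (sorted_insertion ord) /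
      VarStar M (example_coeff m) (example_cover m)"
    and "VarStar M (example_coeff m) (sorted_insertion ord) /
      VarStar M (example_coeff m) (example_cover m) \<le> real m"
    using assms by simp_all
qed

theorem theorem1:
  shows
  "(\<exists>a b C1 C2 (m0::nat). 0 < a \<and> a \<le> b \<and> 0 < C1 \<and> 0 < C2 \<and>
      (\<forall>m\<ge>m0. \<exists>(n::nat) (c::pstring \<Rightarrow> real) R.
          pauli_hamiltonian n c \<and>
          (\<forall>P\<in>supp c. a \<le> \<bar>c P\<bar> \<and> \<bar>c P\<bar> \<le> b) \<and>
          overlapped_grouping c R \<and>
          (\<exists>ord. si_order c ord) \<and>
          (\<forall>ord. si_order c ord \<longrightarrow>
              length (sorted_insertion ord) = m \<and>
              (\<forall>M>0. C1 * real m \<le> VarStar M c (sorted_insertion ord) / VarStar M c R \<and>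
                     VarStar M c (sorted_insertion ord) / VarStar M c R \<le> C2 * real m))))
   \<and>
   (\<exists>C>0. \<forall>(n::nat) (c::pstring \<Rightarrow> real) G R (M::real).
      pauli_hamiltonian n c \<longrightarrow> grouping c G \<longrightarrow> overlapped_grouping c R \<longrightarrow> M > 0 \<longrightarrow>
      VarStar M c G / VarStar M c R \<le> C * real (length G))"
  apply (rule conjI)
   apply (rule exI[of _ 1], rule exI[of _ 2], rule exI[of _ "1/9"], rule exI[of _ 1])
   apply (rule exI[of _ 1])
   apply (use sorted_insertion_gap in simp)
  apply (rule exI[of _ 1])
  apply (auto simp: grouping_def intro: VarStar_ratio_le_length)
  done

end
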